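(* Let $\mathbb F$ be a field of characteristic different from $2$ and $3$, let $f,g,v,w\in\mathbb F$, put $A=X^3+fX+g$, $R=-v(X-w)$ and $D=A^2+4R=(X^3+fX+g)^2-4v(X-w)$. Let $Z=\tfrac12(Y+A)$ on the curve $Y^2=D(X)$, so that $Z^2-AZ-R=0$, and let $\overline Z=\tfrac12(-Y+A)$ be its conjugate. Suppose $Z_0=\bigl(Z+d_0(X+e_0)\bigr)/\bigl(u_0(X^2-v_0X+w_0)\bigr)$, where $u_0(X^2-v_0X+w_0)$ divides $d_0^2(X+e_0)^2+d_0(X+e_0)A-R$, has a two-sided continued fraction expansion all of whose partial quotients have degree $1$, with complete quotients $$Z_h=\frac{Z+d_h(X+e_h)}{u_h(X^2-v_hX+w_h)}\qquad(h\in\mathbb Z),$$ in the sense of the Standing Setup below (with $u_h\neq0$ for all $h$). Let $(T_h)_{h\in\mathbb Z}$ be a sequence of nonzero elements of $\mathbb F$ satisfying $T_{h-1}T_{h+1}=d_hT_h^2$ for all $h$. Then for all $h\in\mathbb Z$, $$T_{h-3}T_{h+3}=v^2\,T_{h-2}T_{h+2}-v^3\,(g+wf+w^3)\,T_h^2 .$$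
   Context: Standing Setup. $\mathbb F$ is a field of characteristic not $2$ or $3$; $f,g\in\mathbb F$; $A=X^3+fX+g\in\mathbb F[X]$; $R\in\mathbb F[X]$ is a polynomial of degree at most $2$; $D=A^2+4R$; $Y$ satisfies $Y^2=D(X)$, $Z=\tfrac12(Y+A)$ and $\overline Z=\tfrac12(-Y+A)$, so $Z+\overline Z=A$ and $Z\overline Z=-R$. We are given sequences $(u_h),(v_h),(w_h),(d_h),(e_h)$ of elements of $\mathbb F$ indexed by $h\in\mathbb Z$, with all $u_h\neq0$, such that $Z_h=\bigl(Z+d_h(X+e_h)\bigr)/\bigl(u_h(X^2-v_hX+w_h)\bigr)$ are the consecutive complete quotients of a continued fraction expansion whose $h$-th line is $$\frac{Z+d_h(X+e_h)}{u_h(X^2-v_hX+w_h)}=\frac{X+v_h}{u_h}-\frac{\overline Z+d_{h+1}(X+e_{h+1})}{u_h(X^2-v_hX+w_h)} .$$ Equivalently, for every $h\in\mathbb Z$ the following two identities hold in $\mathbb F[X]$: (i) $A+d_h(X+e_h)+d_{h+1}(X+e_{h+1})=(X+v_h)(X^2-v_hX+w_h)$; (ii) $-u_hu_{h+1}(X^2-v_hX+w_h)(X^2-v_{h+1}X+w_{h+1})=\bigl(Z+d_{h+1}(X+e_{h+1})\bigr)\bigl(\overline Z+d_{h+1}(X+e_{h+1})\bigr)=d_{h+1}^2(X+e_{h+1})^2+d_{h+1}(X+e_{h+1})A-R$. In this statement $R=-v(X-w)$ with $v,w\in\mathbb F$. *)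

theory Defs
  imports "HOL-Computational_Algebra.Polynomial"
begin

definition cubicA :: "'a::comm_ring_1 \<Rightarrow> 'a \<Rightarrow> 'a poly" where
  "cubicA f g = [:g, f, 0, 1:]"

definition linR :: "'a::comm_ring_1 \<Rightarrow> 'a \<Rightarrow> 'a poly" where
  "linR v w = smult (- v) [:- w, 1:]"

definition quadp :: "'a::comm_ring_1 \<Rightarrow> 'a \<Rightarrow> 'a poly" where
  "quadp a b = [:b, - a, 1:]"

text \<open>Identities (i) and (ii) of the continued fraction expansion (the h-th line),
  with R = linR v w.\<close>
definition cf_line :: "'a::comm_ring_1 \<Rightarrow> 'a \<Rightarrow> 'a \<Rightarrow> 'a \<Rightarrow>
    (int \<Rightarrow> 'a) \<Rightarrow> (int \<Rightarrow> 'a) \<Rightarrow> (int \<Rightarrow> 'a) \<Rightarrow> (int \<Rightarrow> 'a) \<Rightarrow> (int \<Rightarrow> 'a) \<Rightarrow> int \<Rightarrow> bool" where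
  "cf_line f g v w u vs ws d e h \<longleftrightarrow>
     cubicA f g + smult (d h) [:e h, 1:] + smult (d (h+1)) [:e (h+1), 1:]
       = [:vs h, 1:] * quadp (vs h) (ws h)
   \<and> smult (- (u h * u (h+1))) (quadp (vs h) (ws h) * quadp (vs (h+1)) (ws (h+1)))
       = smult ((d (h+1))^2) ([:e (h+1), 1:]^2)
         + smult (d (h+1)) [:e (h+1), 1:] * cubicA f g - linR v w"

end

theory Submission
  imports Defs
begin

(* Comparing coefficients in the h-th line of the expansion gives the two polynomial identities
     d_h d_(h+1) (X^2 - v_h X + w_h) = d_h d_(h+1) (X + e_h) (X + e_(h+1)) + R,
     X^2 - v_(h+1) X + w_(h+1) = (X + v_h) (X + e_(h+1)) - d_h,
   where d_(h+1) = -u_h u_(h+1) is nonzero.  Evaluating the first at X = -e_h, with the second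
   shifted down, gives v (w + e_h) = -d_(h-1) d_h d_(h+1); evaluating it and line (ii) at the root
   w of R gives (w + e_(h-1)) (w + e_h)^2 (w + e_(h+1)) = d_h (w + e_h)^2 + (w + e_h) A(w).
   Multiplying the latter by v^4 expresses d_(h-2) d_(h-1)^2 d_h^3 d_(h+1)^2 d_(h+2) through
   v, A(w) = g + w f + w^3 and d_(h-1) d_h^2 d_(h+1); by the recurrence for T these two products
   are T_(h-3) T_(h+3) / T_h^2 and T_(h-2) T_(h+2) / T_h^2. *)

lemma recurrence_shift2:
  fixes T d :: "int \<Rightarrow> 'a::idom"
  assumes T_nonzero: "\<And>h. T h \<noteq> 0"
    and T_rec: "\<And>h. T (h - 1) * T (h + 1) = d h * T h ^ 2"
  shows "T (h - 2) * T (h + 2) = d (h - 1) * d h ^ 2 * d (h + 1) * T h ^ 2"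
proof -
  have below: "T (h - 2) * T h = d (h - 1) * T (h - 1) ^ 2"
    using T_rec[of "h - 1"] by simp
  have above: "T h * T (h + 2) = d (h + 1) * T (h + 1) ^ 2"
    using T_rec[of "h + 1"] by (simp add: add.assoc)
  have "T h ^ 2 * (T (h - 2) * T (h + 2) - d (h - 1) * d h ^ 2 * d (h + 1) * T h ^ 2) = 0"
    using below above T_rec[of h] by algebra
  then show ?thesis
    using T_nonzero[of h] by simp
qed

lemma recurrence_shift3:
  fixes T d :: "int \<Rightarrow> 'a::idom"
  assumes T_nonzero: "\<And>h. T h \<noteq> 0"
    and T_rec: "\<And>h. T (h - 1) * T (h + 1) = d h * T h ^ 2"
  shows "T (h - 3) * T (h + 3)
    = d (h - 2) * d (h - 1) ^ 2 * d h ^ 3 * d (h + 1) ^ 2 * d (h + 2) * T h ^ 2"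
proof -
  have below: "T (h - 3) * T (h - 1) = d (h - 2) * T (h - 2) ^ 2"
    using T_rec[of "h - 2"] by simp
  have above: "T (h + 1) * T (h + 3) = d (h + 2) * T (h + 2) ^ 2"
    using T_rec[of "h + 2"] by (simp add: ac_simps)
  have "T (h - 1) * T (h + 1)
      * (T (h - 3) * T (h + 3)
         - d (h - 2) * d (h - 1) ^ 2 * d h ^ 3 * d (h + 1) ^ 2 * d (h + 2) * T h ^ 2) = 0"
    using below above T_rec[of h] recurrence_shift2[OF assms, of h] by algebra
  then show ?thesis
    using T_nonzero[of "h - 1"] T_nonzero[of "h + 1"] by simp
qed

locale cf_expansion =
  fixes f g v w :: "'a::idom" and u vs ws d e :: "int \<Rightarrow> 'a"
  assumes u_nonzero: "u h \<noteq> 0"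
    and line: "cf_line f g v w u vs ws d e h"
begin

lemma line_i:
  "cubicA f g + smult (d h) [:e h, 1:] + smult (d (h + 1)) [:e (h + 1), 1:]
     = [:vs h, 1:] * quadp (vs h) (ws h)"
  using line unfolding cf_line_def by blast

lemma line_ii:
  "smult (- (u h * u (h + 1))) (quadp (vs h) (ws h) * quadp (vs (h + 1)) (ws (h + 1)))
     = smult (d (h + 1) ^ 2) ([:e (h + 1), 1:] ^ 2) + smult (d (h + 1)) [:e (h + 1), 1:] * cubicA f g
       - linR v w"
  using line unfolding cf_line_def by blast

lemma d_eq: "d (h + 1) = - (u h * u (h + 1))"
  using arg_cong[OF line_ii, of "\<lambda>p. coeff p 4"]
  by (simp add: cubicA_def quadp_def linR_def numeral_eq_Suc power2_eq_square)

lemma d_nonzero: "d h \<noteq> 0"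
  using d_eq[of "h - 1"] u_nonzero[of h] u_nonzero[of "h - 1"] by simp

lemma line_i_coeffs:
  "f + d h + d (h + 1) = ws h - vs h ^ 2"
  "g + d h * e h + d (h + 1) * e (h + 1) = vs h * ws h"
  using line_i[of h] by (simp_all add: cubicA_def quadp_def algebra_simps power2_eq_square)

lemma line_ii_coeffs:
  "d (h + 1) * (vs h + vs (h + 1) + e (h + 1)) = 0"
  "d (h + 1) * (ws h + ws (h + 1) + vs h * vs (h + 1) - d (h + 1) - f) = 0"
  "d (h + 1) * (vs h * ws (h + 1) + vs (h + 1) * ws h + 2 * d (h + 1) * e (h + 1)
     + e (h + 1) * f + g) = - v"
  "d (h + 1) * (ws h * ws (h + 1) - d (h + 1) * e (h + 1) ^ 2 - e (h + 1) * g) = - v * w"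
  using line_ii[of h] unfolding d_eq[symmetric]
  by (simp_all add: cubicA_def quadp_def linR_def algebra_simps power2_eq_square)
    (elim conjE, algebra)+

lemma succ_coeffs:
  "vs (h + 1) = - vs h - e (h + 1)"
  "ws (h + 1) = vs h * e (h + 1) - d h"
proof -
  have "vs h + vs (h + 1) + e (h + 1) = 0"
    and "ws h + ws (h + 1) + vs h * vs (h + 1) - d (h + 1) - f = 0"
    using line_ii_coeffs(1,2)[of h] d_nonzero[of "h + 1"] by simp_all
  then show "vs (h + 1) = - vs h - e (h + 1)" "ws (h + 1) = vs h * e (h + 1) - d h"
    using line_i_coeffs(1)[of h] by algebra+
qed

lemma quadp_succ: "quadp (vs (h + 1)) (ws (h + 1)) = [:vs h, 1:] * [:e (h + 1), 1:] - [:d h:]"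
  unfolding succ_coeffs by (simp add: quadp_def algebra_simps)

lemma quadp_scaled:
  "smult (d h * d (h + 1)) (quadp (vs h) (ws h))
     = smult (d h * d (h + 1)) ([:e h, 1:] * [:e (h + 1), 1:]) + linR v w"
proof -
  have "d h * d (h + 1) * vs h = v - d h * d (h + 1) * (e h + e (h + 1))"
    using line_ii_coeffs(3)[of h] line_i_coeffs[of h] unfolding succ_coeffs by algebra
  moreover have "d h * d (h + 1) * ws h = d h * d (h + 1) * e h * e (h + 1) + v * w"
    using line_ii_coeffs(4)[of h] line_i_coeffs[of h] unfolding succ_coeffs by algebra
  ultimately show ?thesis
    by (simp add: quadp_def linR_def algebra_simps)
qed

lemma v_mult_w_plus_e: "v * (w + e h) = - (d (h - 1) * d h * d (h + 1))"
proof -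
  have "d h * d (h + 1) * poly (quadp (vs h) (ws h)) (- e h) = v * (w + e h)"
    using arg_cong[OF quadp_scaled[of h], of "\<lambda>p. poly p (- e h)"]
    by (simp add: linR_def algebra_simps)
  moreover have "poly (quadp (vs h) (ws h)) (- e h) = - d (h - 1)"
    using quadp_succ[of "h - 1"] by simp
  ultimately show ?thesis
    by algebra
qed

lemma poly_quadp_at_w: "poly (quadp (vs h) (ws h)) w = (w + e h) * (w + e (h + 1))"
proof -
  have "d h * d (h + 1) * poly (quadp (vs h) (ws h)) w
      = d h * d (h + 1) * ((w + e h) * (w + e (h + 1)))"
    using arg_cong[OF quadp_scaled[of h], of "\<lambda>p. poly p w"]
    by (simp add: linR_def algebra_simps)
  then show ?thesis
    using d_nonzero[of h] d_nonzero[of "h + 1"] by simp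
qed

lemma poly_quadp_mult_at_w:
  "poly (quadp (vs h) (ws h)) w * poly (quadp (vs (h + 1)) (ws (h + 1))) w
     = d (h + 1) * (w + e (h + 1)) ^ 2 + (w + e (h + 1)) * poly (cubicA f g) w"
proof -
  have "d (h + 1) * (poly (quadp (vs h) (ws h)) w * poly (quadp (vs (h + 1)) (ws (h + 1))) w)
      = d (h + 1) * (d (h + 1) * (w + e (h + 1)) ^ 2 + (w + e (h + 1)) * poly (cubicA f g) w)"
    using arg_cong[OF line_ii[of h, folded d_eq], of "\<lambda>p. poly p w"]
    by (simp add: linR_def algebra_simps power2_eq_square)
  then show ?thesis
    using d_nonzero[of "h + 1"] by simp
qed

lemma w_plus_e_product:
  "(w + e (h - 1)) * (w + e h) ^ 2 * (w + e (h + 1))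
     = d h * (w + e h) ^ 2 + (w + e h) * poly (cubicA f g) w"
  using poly_quadp_mult_at_w[of "h - 1"] poly_quadp_at_w[of "h - 1"] poly_quadp_at_w[of h]
  by (simp add: power2_eq_square algebra_simps)

lemma d_product_identity:
  "d (h - 2) * d (h - 1) ^ 2 * d h ^ 3 * d (h + 1) ^ 2 * d (h + 2)
     = v ^ 2 * d (h - 1) * d h ^ 2 * d (h + 1) - v ^ 3 * poly (cubicA f g) w"
proof -
  have below: "v * (w + e (h - 1)) = - (d (h - 2) * d (h - 1) * d h)"
    using v_mult_w_plus_e[of "h - 1"] by simp
  have above: "v * (w + e (h + 1)) = - (d h * d (h + 1) * d (h + 2))"
    using v_mult_w_plus_e[of "h + 1"] by (simp add: add.assoc)
  have "d (h - 1) * d h * d (h + 1)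
      * (d (h - 2) * d (h - 1) ^ 2 * d h ^ 3 * d (h + 1) ^ 2 * d (h + 2)
         - (v ^ 2 * d (h - 1) * d h ^ 2 * d (h + 1) - v ^ 3 * poly (cubicA f g) w)) = 0"
    using below v_mult_w_plus_e[of h] above w_plus_e_product[of h] by algebra
  then show ?thesis
    using d_nonzero[of "h - 1"] d_nonzero[of h] d_nonzero[of "h + 1"] by simp
qed

end

theorem mainTheorem1:
  fixes f g v w :: "'a::field"
    and u vs ws d e T :: "int \<Rightarrow> 'a"
  assumes char2: "(2::'a) \<noteq> 0" and char3: "(3::'a) \<noteq> 0"
    and u_nz: "\<And>h. u h \<noteq> 0"
    and cf: "\<And>h. cf_line f g v w u vs ws d e h"
    and T_nz: "\<And>h. T h \<noteq> 0"
    and T_rec: "\<And>h. T (h - 1) * T (h + 1) = d h * (T h)^2"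
  shows "\<forall>h. T (h - 3) * T (h + 3)
           = v^2 * T (h - 2) * T (h + 2) - v^3 * (g + w * f + w^3) * (T h)^2"
proof
  \<comment> \<open>The identity holds in every integral domain.\<close>
  fix h :: int
  interpret cf_expansion f g v w u vs ws d e
    using u_nz cf by unfold_locales
  have "poly (cubicA f g) w = g + w * f + w ^ 3"
    by (simp add: cubicA_def algebra_simps power3_eq_cube)
  then show "T (h - 3) * T (h + 3)
      = v^2 * T (h - 2) * T (h + 2) - v^3 * (g + w * f + w^3) * (T h)^2"
    using recurrence_shift3[OF T_nz T_rec, of h] recurrence_shift2[OF T_nz T_rec, of h]
      d_product_identity[of h]
    by algebra
qed

end
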